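(* Assume $\mathrm{recc}(C)\subseteq\mathrm{recc}(P^B)$. Then $$P^B\setminus T^C=\bigcup_{k\in N_2\cup\{0\}}\big(P^B\setminus S_k^C\big).$$
   Context: Let $A\in\mathbb{R}^{m\times n}$ have full row rank, $b\in\mathbb{R}^m$, and $P=\{x\in\mathbb{R}^n_+ : Ax=b\}$. Let $C\subseteq\mathbb{R}^n$ be an open convex set. Fix a basis $B\subseteq\{1,\dots,n\}$ of $P$ with nonbasic set $N=\{1,\dots,n\}\setminus B$. Write $P=\{x: x_i=\bar b_i-\sum_{j\in N}\bar a_{ij}x_j\ (i\in B),\ x_j\ge0\ (j=1,\dots,n)\}$ with $\bar b\ge0$. The basic solution $\bar x$ has $\bar x_i=\bar b_i$ ($i\in B$) and $\bar x_i=0$ ($i\in N$). $P^B$ is obtained by dropping the constraints $x_i\ge0$ for $i\in B$. For $j\in N$, $\bar r^j$ is given by $\bar r^j_k=-\bar a_{kj}$ ($k\in B$), $\bar r^j_j=1$, and $\bar r^j_k=0$ ($k\in N\setminus\{j\}$). Thus $P^B=\{\bar x+\sum_{j\in N}x_j\bar r^j: x_j\ge0\}$, a translated simplicial cone with linearly independent extreme rays $\bar r^j$. It is assumed that $\bar x\notin\mathrm{cl}(C)$. For $j\in N$, $\alpha_j=\inf\{\lambda\ge0:\bar x+\lambda\bar r^j\in C\}$ and $\beta_j=\sup\{\lambda\ge0:\bar x+\lambda\bar r^j\in C\}$, with $\alpha_j=+\infty$, $\beta_j=-\infty$ if that halfline misses $C$. The set $N$ is partitioned into - $N_0=\{j:\alpha_j=+\infty,\beta_j=-\infty\}$,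 - $N_1=\{j:\alpha_j\in(0,\infty),\beta_j=+\infty\}$, - $N_2=\{j:\alpha_j\in(0,\infty),\beta_j\in(\alpha_j,\infty)\}$. Let $N_{12}=N_1\cup N_2$. For a set $K$, $\mathrm{recc}(K)=\{d: x+\lambda d\in K\ \forall x\in K,\lambda\ge0\}$. Define - $T^C=\{\bar x\}+\mathrm{conv}\big(\bigcup_{j\in N_{12}}\{\lambda\bar r^j:\alpha_j<\lambda<\beta_j\}\big)+\mathrm{recc}(C)$; - $S_0^C=\{\bar x\}+\mathrm{conv}\big(\bigcup_{j\in N_{12}}\{\lambda\bar r^j:\lambda>\alpha_j\}\big)+\mathrm{recc}(C)$; - for each $k\in N_2$, $S_k^C=\{\bar x\}+\mathrm{conv}\big(\bigcup_{j\in N_2}\{\lambda\bar r^j:0\le\lambda<\beta_j\}\big)+\{\lambda\bar r^k:\lambda\le0\}+\mathrm{recc}(C)$. (The index $0$ is not an element of $N$.) *)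

theory Defs
  imports "HOL-Analysis.Analysis" "HOL-Library.Extended_Real"
begin

definition recc :: "'a::real_vector set \<Rightarrow> 'a set" where
  "recc K = {d. \<forall>x\<in>K. \<forall>t::real. t \<ge> 0 \<longrightarrow> x + t *\<^sub>R d \<in> K}"

definition xbar :: "'n::finite set \<Rightarrow> ('n \<Rightarrow> real) \<Rightarrow> real^'n" where
  "xbar B bb = (\<chi> i. if i \<in> B then bb i else 0)"

definition rbar :: "'n::finite set \<Rightarrow> ('n \<Rightarrow> 'n \<Rightarrow> real) \<Rightarrow> 'n \<Rightarrow> real^'n" where
  "rbar B ab j = (\<chi> k. if k \<in> B then - ab k j else if k = j then 1 else 0)"

text \<open>P^B: the tableau polyhedron with the nonnegativity of the basic variables dropped.\<close>
definition PB :: "'n::finite set \<Rightarrow> ('n \<Rightarrow> real) \<Rightarrow> ('n \<Rightarrow> 'n \<Rightarrow> real) \<Rightarrow> (real^'n) set" where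
  "PB B bb ab = {x. (\<forall>i\<in>B. x$i = bb i - (\<Sum>j\<in>-B. ab i j * x$j)) \<and> (\<forall>j\<in>-B. 0 \<le> x$j)}"

definition alpha :: "(real^'n::finite) set \<Rightarrow> 'n set \<Rightarrow> ('n \<Rightarrow> real) \<Rightarrow> ('n \<Rightarrow> 'n \<Rightarrow> real) \<Rightarrow> 'n \<Rightarrow> ereal" where
  "alpha C B bb ab j = Inf (ereal ` {l. 0 \<le> l \<and> xbar B bb + l *\<^sub>R rbar B ab j \<in> C})"

definition beta :: "(real^'n::finite) set \<Rightarrow> 'n set \<Rightarrow> ('n \<Rightarrow> real) \<Rightarrow> ('n \<Rightarrow> 'n \<Rightarrow> real) \<Rightarrow> 'n \<Rightarrow> ereal" where
  "beta C B bb ab j = Sup (ereal ` {l. 0 \<le> l \<and> xbar B bb + l *\<^sub>R rbar B ab j \<in> C})"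

definition N0 :: "(real^'n::finite) set \<Rightarrow> 'n set \<Rightarrow> ('n \<Rightarrow> real) \<Rightarrow> ('n \<Rightarrow> 'n \<Rightarrow> real) \<Rightarrow> 'n set" where
  "N0 C B bb ab = {j\<in>-B. alpha C B bb ab j = \<infinity> \<and> beta C B bb ab j = -\<infinity>}"

definition N1 :: "(real^'n::finite) set \<Rightarrow> 'n set \<Rightarrow> ('n \<Rightarrow> real) \<Rightarrow> ('n \<Rightarrow> 'n \<Rightarrow> real) \<Rightarrow> 'n set" where
  "N1 C B bb ab = {j\<in>-B. 0 < alpha C B bb ab j \<and> alpha C B bb ab j < \<infinity> \<and> beta C B bb ab j = \<infinity>}"

definition N2 :: "(real^'n::finite) set \<Rightarrow> 'n set \<Rightarrow> ('n \<Rightarrow> real) \<Rightarrow> ('n \<Rightarrow> 'n \<Rightarrow> real) \<Rightarrow> 'n set" where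
  "N2 C B bb ab = {j\<in>-B. 0 < alpha C B bb ab j \<and> alpha C B bb ab j < \<infinity> \<and>
                         alpha C B bb ab j < beta C B bb ab j \<and> beta C B bb ab j < \<infinity>}"

definition TC :: "(real^'n::finite) set \<Rightarrow> 'n set \<Rightarrow> ('n \<Rightarrow> real) \<Rightarrow> ('n \<Rightarrow> 'n \<Rightarrow> real) \<Rightarrow> (real^'n) set" where
  "TC C B bb ab = {xbar B bb + u + d | u d.
     u \<in> convex hull (\<Union>j\<in>N1 C B bb ab \<union> N2 C B bb ab.
            {l *\<^sub>R rbar B ab j | l. alpha C B bb ab j < ereal l \<and> ereal l < beta C B bb ab j})
     \<and> d \<in> recc C}"

definition S0 :: "(real^'n::finite) set \<Rightarrow> 'n set \<Rightarrow> ('n \<Rightarrow> real) \<Rightarrow> ('n \<Rightarrow> 'n \<Rightarrow> real) \<Rightarrow> (real^'n) set" where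
  "S0 C B bb ab = {xbar B bb + u + d | u d.
     u \<in> convex hull (\<Union>j\<in>N1 C B bb ab \<union> N2 C B bb ab.
            {l *\<^sub>R rbar B ab j | l. alpha C B bb ab j < ereal l})
     \<and> d \<in> recc C}"

definition Sk :: "(real^'n::finite) set \<Rightarrow> 'n set \<Rightarrow> ('n \<Rightarrow> real) \<Rightarrow> ('n \<Rightarrow> 'n \<Rightarrow> real) \<Rightarrow> 'n \<Rightarrow> (real^'n) set" where
  "Sk C B bb ab k = {xbar B bb + u + \<mu> *\<^sub>R rbar B ab k + d | u \<mu> d.
     u \<in> convex hull (\<Union>j\<in>N2 C B bb ab.
            {l *\<^sub>R rbar B ab j | l. 0 \<le> l \<and> ereal l < beta C B bb ab j})
     \<and> \<mu> \<le> 0 \<and> d \<in> recc C}"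

end

theory Submission
  imports Defs
begin

text \<open>
  Write \<open>x = x\<^sub>0 + y\<close> with \<open>x\<^sub>0\<close> the basic solution. Inside the cone spanned by the rays
  \<open>r\<^sub>j\<close>, \<open>j \<in> N\<^sub>1 \<union> N\<^sub>2\<close>, put \<open>F z = \<Sum> z\<^sub>j / \<alpha>\<^sub>j\<close> (over \<open>N\<^sub>1 \<union> N\<^sub>2\<close>) and
  \<open>G z = \<Sum> z\<^sub>j / \<beta>\<^sub>j\<close> (over \<open>N\<^sub>2\<close>).
  The generators of \<open>S\<^sub>0\<^sup>C\<close> satisfy \<open>F > 1\<close>, those of \<open>S\<^sub>k\<^sup>C\<close> (up to a shift along \<open>-r\<^sub>k\<close>)
  satisfy \<open>G < 1\<close>, and every point of the cone with \<open>F > 1\<close> and \<open>G < 1\<close> lies in the convex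
  hull of the generators of \<open>T\<^sup>C\<close>.

  If \<open>x\<close> lies in \<open>S\<^sub>0\<^sup>C\<close> and in every \<open>S\<^sub>k\<^sup>C\<close>, then \<open>y = u + d\<^sub>0 = w\<^sub>k + d\<^sub>k\<close> with \<open>F u > 1\<close>,
  \<open>G w\<^sub>k < 1\<close> and all \<open>d\<close> in the convex cone \<open>recc C\<close>. Minimising \<open>G\<close> over the points of
  \<open>conv {u, w\<^sub>k}\<close> that are nonnegative on \<open>N\<^sub>2\<close> gives such a point \<open>p\<close> with \<open>G p < 1\<close>: a point
  with \<open>G \<ge> 1\<close> has some positive coordinate \<open>k\<close> and is improved by moving slightly towards
  \<open>w\<^sub>k\<close>. On the cone \<open>F \<ge> m G\<close> with \<open>m = min \<beta>\<^sub>j / \<alpha>\<^sub>j > 1\<close>, so some point \<open>z\<close> of the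
  segment \<open>[u, p]\<close> has \<open>F z > 1\<close> and \<open>G z < 1\<close>, while \<open>y - z\<close> stays in \<open>recc C\<close>;
  hence \<open>x \<in> T\<^sup>C\<close>. The converse inclusions are direct once one knows that the rays
  \<open>r\<^sub>j\<close>, \<open>j \<in> N\<^sub>1\<close>, are recession directions of the open convex set \<open>C\<close>.
\<close>

section \<open>Recession cones\<close>

lemma convex_cone_recc: "convex_cone (recc K)"
  unfolding convex_cone_iff
proof (intro conjI ballI allI impI)
  show "0 \<in> recc K" by (simp add: recc_def)
next
  fix d e assume d: "d \<in> recc K" and e: "e \<in> recc K"
  show "d + e \<in> recc K" unfolding recc_def
  proof (intro CollectI ballI allI impI)
    fix x and t :: real assume "x \<in> K" "0 \<le> t"
    then have "(x + t *\<^sub>R d) + t *\<^sub>R e \<in> K" using d e unfolding recc_def by blast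
    then show "x + t *\<^sub>R (d + e) \<in> K" by (simp add: scaleR_add_right add.assoc)
  qed
next
  fix d and c :: real assume "d \<in> recc K" "0 \<le> c"
  then show "c *\<^sub>R d \<in> recc K" by (simp add: recc_def)
qed

lemma convex_recc: "convex (recc K)"
  using convex_cone_recc[of K] by (simp add: convex_cone_def)

lemma convex_diff_in_recc: "convex {z. y - z \<in> recc K}"
proof (rule convexI)
  fix z w and u v :: real
  assume "z \<in> {z. y - z \<in> recc K}" "w \<in> {z. y - z \<in> recc K}" "0 \<le> u" "0 \<le> v" "u + v = 1"
  then have "u *\<^sub>R (y - z) + v *\<^sub>R (y - w) \<in> recc K"
    by (intro convexD[OF convex_recc]) auto
  moreover have "u *\<^sub>R (y - z) + v *\<^sub>R (y - w) = (u + v) *\<^sub>R y - (u *\<^sub>R z + v *\<^sub>R w)"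
    by (simp add: algebra_simps)
  ultimately show "u *\<^sub>R z + v *\<^sub>R w \<in> {z. y - z \<in> recc K}" using \<open>u + v = 1\<close> by simp
qed

text \<open>The point \<open>z + t v\<close> is a convex combination of \<open>p + l v\<close>, far out on the ray,
  and of a point \<open>q\<close> so close to \<open>z\<close> that it still lies in \<open>C\<close>.\<close>
lemma unbounded_ray_in_recc:
  fixes C :: "'a::real_normed_vector set"
  assumes "open C" "convex C" and unbounded: "\<And>M. \<exists>l>M. p + l *\<^sub>R v \<in> C"
  shows "v \<in> recc C"
  unfolding recc_def
proof (intro CollectI ballI allI impI)
  fix z and t :: real assume z: "z \<in> C" and "0 \<le> t"
  show "z + t *\<^sub>R v \<in> C"
  proof (cases "t = 0")
    case True then show ?thesis using z by simp
  next
    case False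
    with \<open>0 \<le> t\<close> have t: "0 < t" by simp
    obtain e where e: "0 < e" "ball z e \<subseteq> C" using \<open>open C\<close> z open_contains_ball by blast
    obtain l where l: "max (2 * t) (2 * t * norm (z - p) / e) < l" "p + l *\<^sub>R v \<in> C"
      using unbounded by blast
    define \<theta> where "\<theta> = t / l"
    have "0 < l" using l(1) t by linarith
    have \<theta>: "0 < \<theta>" "\<theta> < 1/2" "\<theta> * l = t" using l(1) t \<open>0 < l\<close> by (auto simp: \<theta>_def field_simps)
    have "2 * \<theta> * norm (z - p) < e"
      using l(1) e \<open>0 < l\<close> by (auto simp: \<theta>_def field_simps)
    define q where "q = z + (\<theta> / (1 - \<theta>)) *\<^sub>R (z - p)"
    have "dist z q = \<theta> / (1 - \<theta>) * norm (z - p)"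
      using \<theta> by (simp add: q_def dist_norm)
    also have "\<dots> \<le> 2 * \<theta> * norm (z - p)"
      using \<theta> by (intro mult_right_mono) (auto simp: field_simps)
    finally have "q \<in> C" using e \<open>2 * \<theta> * norm (z - p) < e\<close> by auto
    then have "(1 - \<theta>) *\<^sub>R q + \<theta> *\<^sub>R (p + l *\<^sub>R v) \<in> C"
      using \<open>convex C\<close> l(2) \<theta> by (intro convexD) auto
    moreover have "(1 - \<theta>) *\<^sub>R q + \<theta> *\<^sub>R (p + l *\<^sub>R v) = z + t *\<^sub>R v"
    proof -
      have "(1 - \<theta>) *\<^sub>R q = (1 - \<theta>) *\<^sub>R z + \<theta> *\<^sub>R (z - p)"
        using \<theta> by (simp add: q_def scaleR_add_right)
      then show ?thesis
        by (simp add: algebra_simps flip: \<theta>(3))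
    qed
    ultimately show ?thesis by simp
  qed
qed

lemma exists_sum_eq_one_between:
  fixes lo hi :: "'i \<Rightarrow> real"
  assumes "\<forall>j\<in>J. lo j < hi j" "sum lo J < 1" "1 < sum hi J"
  shows "\<exists>t. (\<forall>j\<in>J. lo j < t j \<and> t j < hi j) \<and> sum t J = 1"
proof -
  define \<theta> where "\<theta> = (1 - sum lo J) / (sum hi J - sum lo J)"
  have \<theta>: "0 < \<theta>" "\<theta> < 1" using assms(2,3) by (auto simp: \<theta>_def field_simps)
  define t where "t j = lo j + \<theta> * (hi j - lo j)" for j
  have "sum t J = sum lo J + \<theta> * (sum hi J - sum lo J)"
    by (simp add: t_def sum.distrib flip: sum_distrib_left sum_subtractf)
  also have "\<dots> = 1" using assms(2,3) by (simp add: \<theta>_def)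
  finally have "sum t J = 1" .
  moreover have "lo j < t j \<and> t j < hi j" if "j \<in> J" for j
  proof -
    have "0 < hi j - lo j" using assms(1) that by simp
    then have "0 < \<theta> * (hi j - lo j) \<and> \<theta> * (hi j - lo j) < 1 * (hi j - lo j)"
      using \<theta> by (intro conjI mult_pos_pos mult_strict_right_mono) auto
    then show ?thesis by (simp add: t_def)
  qed
  ultimately show ?thesis by (intro exI[of _ t]) blast
qed

lemma linear_levels_crossing:
  fixes f g :: "'a::real_vector \<Rightarrow> real"
  assumes "linear g" "convex K" "u \<in> K" "p \<in> K" "1 < f u" "g p < 1"
    and "1 < m" "\<forall>z\<in>K. m * g z \<le> f z"
  shows "\<exists>z\<in>K. 1 < f z \<and> g z < 1"
proof (cases "g u < 1")
  case True then show ?thesis using assms by blast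
next
  case False
  define c where "c = (max (g p) (1 / m) + 1) / 2"
  have "1 / m < 1" using \<open>1 < m\<close> by simp
  then have c: "g p < c" "1 / m < c" "c < 1" using \<open>g p < 1\<close> by (auto simp: c_def max_def)
  define s where "s = (g u - c) / (g u - g p)"
  have s: "0 \<le> s" "s \<le> 1" using False c by (auto simp: s_def field_simps)
  define z where "z = (1 - s) *\<^sub>R u + s *\<^sub>R p"
  have "z \<in> K" using assms(2-4) s by (simp add: z_def convexD)
  have "g z = (1 - s) * g u + s * g p"
    by (simp add: z_def linear_add[OF \<open>linear g\<close>] linear_scale[OF \<open>linear g\<close>])
  also have "\<dots> = g u - s * (g u - g p)" by (simp add: algebra_simps)
  also have "\<dots> = c" using False c by (simp add: s_def)
  finally have "g z = c" .
  moreover have "1 < m * c" using c \<open>1 < m\<close> by (simp add: field_simps)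
  moreover have "m * c \<le> f z" using assms(8) \<open>z \<in> K\<close> \<open>g z = c\<close> by blast
  ultimately have "1 < f z \<and> g z < 1" using c(3) by linarith
  then show ?thesis using \<open>z \<in> K\<close> by blast
qed

section \<open>Coordinates along the extreme rays\<close>

definition coord_nonneg :: "'n set \<Rightarrow> (real^'n) set" where
  "coord_nonneg S = {z. \<forall>j\<in>S. 0 \<le> z$j}"

definition coord_zero :: "'n set \<Rightarrow> (real^'n) set" where
  "coord_zero S = {z. \<forall>j\<in>S. z$j = 0}"

text \<open>The linear span of the rays \<open>rbar B ab j\<close>, \<open>j \<notin> B\<close>, that is, the direction space of \<open>PB B bb ab\<close>.\<close>
definition ray_space :: "'n::finite set \<Rightarrow> ('n \<Rightarrow> 'n \<Rightarrow> real) \<Rightarrow> (real^'n) set" where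
  "ray_space B ab = {z. \<forall>i\<in>B. z$i = - (\<Sum>j\<in>-B. ab i j * z$j)}"

text \<open>For \<open>S \<subseteq> -B\<close> this is the cone generated by the rays \<open>rbar B ab j\<close>, \<open>j \<in> S\<close>.\<close>
definition ray_cone :: "'n::finite set \<Rightarrow> ('n \<Rightarrow> 'n \<Rightarrow> real) \<Rightarrow> 'n set \<Rightarrow> (real^'n) set" where
  "ray_cone B ab S = ray_space B ab \<inter> coord_nonneg S \<inter> coord_zero (-B - S)"

lemma convex_coord_nonneg: "convex (coord_nonneg S)"
  unfolding coord_nonneg_def convex_def by auto

lemma closed_coord_nonneg: "closed (coord_nonneg S)"
proof -
  have "coord_nonneg S = (\<Inter>j\<in>S. {z. z$j \<ge> 0})" by (auto simp: coord_nonneg_def)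
  then show ?thesis by (simp add: closed_INT closed_halfspace_component_ge_cart)
qed

lemma coord_nonneg_Un: "coord_nonneg (S \<union> T) = coord_nonneg S \<inter> coord_nonneg T"
  by (auto simp: coord_nonneg_def)

lemma coord_zero_antimono: "S \<subseteq> T \<Longrightarrow> coord_zero T \<subseteq> coord_zero S"
  by (auto simp: coord_zero_def)

lemma coord_zero_subset_nonneg: "coord_zero S \<subseteq> coord_nonneg S"
  by (auto simp: coord_zero_def coord_nonneg_def)

lemma convex_coord_zero: "convex (coord_zero S)"
  unfolding coord_zero_def convex_def by auto

lemma subspace_ray_space: "subspace (ray_space B ab)"
  unfolding subspace_def ray_space_def
  by (auto simp: sum.distrib sum_distrib_left algebra_simps)

lemma convex_ray_cone: "convex (ray_cone B ab S)"
  unfolding ray_cone_def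
  by (intro convex_Int subspace_imp_convex subspace_ray_space convex_coord_nonneg convex_coord_zero)

lemma rbar_component_nonbasic: "i \<notin> B \<Longrightarrow> rbar B ab j $ i = (if i = j then 1 else 0)"
  by (simp add: rbar_def)

lemma weighted_coords_rbar:
  assumes "k \<notin> B" "S \<subseteq> -B"
  shows "(\<Sum>j\<in>S. c j * (l *\<^sub>R rbar B ab k) $ j) = (if k \<in> S then c k * l else 0)"
proof -
  have "(\<Sum>j\<in>S. c j * (l *\<^sub>R rbar B ab k) $ j) = (\<Sum>j\<in>S. if j = k then c k * l else 0)"
    using assms by (intro sum.cong) (auto simp: rbar_component_nonbasic)
  then show ?thesis by (simp add: sum.delta')
qed

lemma rbar_in_ray_space:
  assumes "j \<notin> B"
  shows "rbar B ab j \<in> ray_space B ab"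
proof -
  have "(\<Sum>j'\<in>-B. ab i j' * rbar B ab j $ j') = ab i j" for i
    using weighted_coords_rbar[of j B "-B" "ab i" 1] assms by simp
  then show ?thesis by (simp add: ray_space_def rbar_def)
qed

lemma scaleR_rbar_in_ray_cone:
  assumes "j \<in> S" "S \<subseteq> -B" "0 \<le> l"
  shows "l *\<^sub>R rbar B ab j \<in> ray_cone B ab S"
  using assms subspace_scale[OF subspace_ray_space rbar_in_ray_space, of j B]
  by (auto simp: ray_cone_def coord_nonneg_def coord_zero_def rbar_component_nonbasic)

lemma ray_space_eq_sum:
  assumes "z \<in> ray_space B ab" "J \<subseteq> -B" "z \<in> coord_zero (-B - J)"
  shows "z = (\<Sum>j\<in>J. z$j *\<^sub>R rbar B ab j)"
proof -
  have "(\<Sum>j\<in>J. z$j *\<^sub>R rbar B ab j) = (\<Sum>j\<in>-B. z$j *\<^sub>R rbar B ab j)"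
    using assms(2,3) by (intro sum.mono_neutral_left) (auto simp: coord_zero_def)
  moreover have "(\<Sum>j\<in>-B. z$j *\<^sub>R rbar B ab j) $ i = z$i" for i
  proof (cases "i \<in> B")
    case True
    then show ?thesis using assms(1)
      by (simp add: sum_component ray_space_def rbar_def sum_negf mult.commute)
  next
    case False
    have "(\<Sum>j\<in>-B. z$j * rbar B ab j $ i) = (\<Sum>j\<in>-B. if j = i then z$j else 0)"
      using False by (intro sum.cong) (auto simp: rbar_component_nonbasic)
    then show ?thesis using False by (simp add: sum_component sum.delta')
  qed
  ultimately show ?thesis by (simp add: vec_eq_iff)
qed

lemma linear_weighted_coords: "linear (\<lambda>z::real^'n. \<Sum>j\<in>S. c j * z$j)"
  by (rule linearI) (simp_all add: sum.distrib sum_distrib_left algebra_simps)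

lemma convex_weighted_coords_less: "convex {z::real^'n. (\<Sum>j\<in>S. c j * z$j) < d}"
  using convex_linear_vimage[OF linear_weighted_coords, of "{..<d}" c S] by (simp add: vimage_def)

lemma convex_weighted_coords_greater: "convex {z::real^'n. d < (\<Sum>j\<in>S. c j * z$j)}"
  using convex_linear_vimage[OF linear_weighted_coords, of "{d<..}" c S] by (simp add: vimage_def)

lemma ray_cone_zero_off_support:
  assumes "z \<in> ray_cone B ab S"
  shows "z \<in> coord_zero (-B - {j\<in>S. 0 < z$j})"
  unfolding coord_zero_def
proof (intro CollectI ballI)
  fix j assume j: "j \<in> -B - {j\<in>S. 0 < z$j}"
  show "z$j = 0"
  proof (cases "j \<in> S")
    case True
    then have "0 \<le> z$j" "\<not> 0 < z$j" using assms j by (auto simp: ray_cone_def coord_nonneg_def)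
    then show ?thesis by linarith
  next
    case False
    then show ?thesis using assms j by (simp add: ray_cone_def coord_zero_def)
  qed
qed

lemma ray_cone_weighted_coords_support:
  assumes "z \<in> ray_cone B ab S" "S \<subseteq> -B"
  shows "(\<Sum>j\<in>S. c j * z$j) = (\<Sum>j\<in>{j\<in>S. 0 < z$j}. c j * z$j)"
proof -
  have "c j * z$j = (if 0 < z$j then c j * z$j else 0)" if "j \<in> S" for j
  proof -
    have "z$j = 0" if "\<not> 0 < z$j"
    proof -
      have "j \<in> -B - {j\<in>S. 0 < z$j}" using assms(2) \<open>j \<in> S\<close> that by blast
      then show ?thesis
        using ray_cone_zero_off_support[OF assms(1)] unfolding coord_zero_def mem_Collect_eq by blast
    qed
    then show ?thesis by simp
  qed
  then show ?thesis by (simp add: sum.inter_filter cong: sum.cong)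
qed

lemma ray_cone_eq_sum:
  assumes "z \<in> ray_cone B ab S" "S \<subseteq> -B"
  shows "z = (\<Sum>j\<in>{j\<in>S. 0 < z$j}. z$j *\<^sub>R rbar B ab j)"
proof (rule ray_space_eq_sum)
  show "z \<in> ray_space B ab" using assms(1) by (simp add: ray_cone_def)
  show "{j\<in>S. 0 < z$j} \<subseteq> -B" using assms(2) by blast
  show "z \<in> coord_zero (-B - {j\<in>S. 0 < z$j})" by (rule ray_cone_zero_off_support[OF assms(1)])
qed

lemma convex_hull_point_below_one:
  fixes W :: "(real^'n) set" and S :: "'n set" and c :: "'n \<Rightarrow> real"
  defines "g \<equiv> \<lambda>z::real^'n. \<Sum>j\<in>S. c j * z$j"
  assumes "finite W" "u \<in> W" "u \<in> coord_nonneg S" and c_pos: "\<forall>j\<in>S. 0 < c j"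
    and escape: "\<forall>k\<in>S. \<exists>w\<in>W. w \<in> coord_nonneg (S - {k}) \<and> g w < 1"
  shows "\<exists>p \<in> convex hull W \<inter> coord_nonneg S. g p < 1"
proof -
  let ?Q = "convex hull W \<inter> coord_nonneg S"
  have "compact ?Q"
    using finite_imp_compact_convex_hull[OF \<open>finite W\<close>] closed_coord_nonneg
    by (rule compact_Int_closed)
  moreover have "u \<in> ?Q" using assms(3,4) by (simp add: hull_inc)
  moreover have "continuous_on ?Q g" unfolding g_def by (intro continuous_intros)
  ultimately obtain p where p: "p \<in> ?Q" "\<forall>q\<in>?Q. g p \<le> g q"
    using continuous_attains_inf by blast
  have "g p < 1"
  proof (rule ccontr)
    assume "\<not> g p < 1"
    obtain k where k: "k \<in> S" "0 < p$k"
    proof -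
      have "\<not> (\<forall>k\<in>S. p$k \<le> 0)"
      proof
        assume "\<forall>k\<in>S. p$k \<le> 0"
        then have "g p \<le> 0"
          unfolding g_def using c_pos by (intro sum_nonpos) (simp add: mult_nonneg_nonpos less_imp_le)
        then show False using \<open>\<not> g p < 1\<close> by simp
      qed
      then show ?thesis using that by force
    qed
    obtain w where w: "w \<in> W" "w \<in> coord_nonneg (S - {k})" "g w < 1"
      using escape k(1) by blast
    \<comment> \<open>a small step from \<open>p\<close> towards \<open>w\<close> keeps the \<open>k\<close>-th coordinate positive and decreases \<open>g\<close>\<close>
    define t where "t = p$k / (p$k + \<bar>w$k\<bar> + 1)"
    have t: "0 < t" "t < 1" using k by (auto simp: t_def field_simps)
    have "p$k + \<bar>w$k\<bar> + 1 \<noteq> 0" using k abs_ge_zero[of "w$k"] by linarith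
    then have "t * (p$k + \<bar>w$k\<bar> + 1) = p$k" by (simp add: t_def)
    then have t_eq: "t * p$k + t * \<bar>w$k\<bar> + t = p$k"
      by (simp add: distrib_left)
    define q where "q = (1 - t) *\<^sub>R p + t *\<^sub>R w"
    have "q \<in> convex hull W"
      using p(1) w(1) t unfolding q_def by (intro convexD[OF convex_convex_hull]) (auto simp: hull_inc)
    moreover have "q \<in> coord_nonneg S"
    proof -
      have "t * (- \<bar>w$k\<bar>) \<le> t * w$k" using t by (intro mult_left_mono) auto
      then have "0 < (1 - t) * p$k + t * w$k" using t_eq t by (simp add: algebra_simps)
      moreover have "0 \<le> (1 - t) * p$j + t * w$j" if "j \<in> S" "j \<noteq> k" for j
        using p(1) w(2) t that by (simp add: coord_nonneg_def)
      ultimately show ?thesis by (force simp: coord_nonneg_def q_def)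
    qed
    ultimately have "q \<in> ?Q" by blast
    have "g q = (1 - t) * g p + t * g w"
      using linear_weighted_coords[of c S, folded g_def]
      by (simp add: q_def linear_add linear_scale)
    moreover have "t * g w < t * g p" using w(3) \<open>\<not> g p < 1\<close> t by simp
    ultimately have "g q < g p" by (simp add: algebra_simps)
    then show False using p(2) \<open>q \<in> ?Q\<close> by force
  qed
  then show ?thesis using p(1) by blast
qed

section \<open>The sets \<open>T\<^sup>C\<close>, \<open>S\<^sub>0\<^sup>C\<close> and \<open>S\<^sub>k\<^sup>C\<close>\<close>

locale open_convex_cut =
  fixes C :: "(real^'n::finite) set" and B :: "'n set"
    and bb :: "'n \<Rightarrow> real" and ab :: "'n \<Rightarrow> 'n \<Rightarrow> real"
  assumes open_C: "open C" and convex_C: "convex C"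
begin

abbreviation "n1 \<equiv> N1 C B bb ab"
abbreviation "n2 \<equiv> N2 C B bb ab"
abbreviation "al \<equiv> alpha C B bb ab"
abbreviation "be \<equiv> beta C B bb ab"
abbreviation "a j \<equiv> real_of_ereal (al j)"
abbreviation "b j \<equiv> real_of_ereal (be j)"
abbreviation "r \<equiv> rbar B ab"
abbreviation "xb \<equiv> xbar B bb"

text \<open>On a single ray \<open>\<lambda> r\<^sub>j\<close>, \<open>F > 1\<close> says \<open>\<lambda> > \<alpha>\<^sub>j\<close> and (for \<open>j \<in> N\<^sub>2\<close>) \<open>G < 1\<close> says \<open>\<lambda> < \<beta>\<^sub>j\<close>.\<close>
abbreviation "F z \<equiv> \<Sum>j\<in>n1 \<union> n2. (1 / a j) * z$j"
abbreviation "G z \<equiv> \<Sum>j\<in>n2. (1 / b j) * z$j"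

abbreviation "gens_T \<equiv> \<Union>j\<in>n1 \<union> n2. {l *\<^sub>R r j | l. al j < ereal l \<and> ereal l < be j}"
abbreviation "gens_S0 \<equiv> \<Union>j\<in>n1 \<union> n2. {l *\<^sub>R r j | l. al j < ereal l}"
abbreviation "gens_Sk \<equiv> \<Union>j\<in>n2. {l *\<^sub>R r j | l. 0 \<le> l \<and> ereal l < be j}"

lemma N12_nonbasic: "n1 \<union> n2 \<subseteq> -B"
  by (auto simp: N1_def N2_def)

lemma N1_N2_disjoint: "n1 \<inter> n2 = {}"
  by (auto simp: N1_def N2_def)

lemma alpha_finite: "j \<in> n1 \<union> n2 \<Longrightarrow> al j = ereal (a j) \<and> 0 < a j"
  by (cases "al j") (auto simp: N1_def N2_def)

lemma beta_finite:
  assumes "j \<in> n2"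
  shows "be j = ereal (b j) \<and> a j < b j"
proof -
  have "al j < be j" "be j < \<infinity>" using assms by (auto simp: N2_def)
  moreover obtain \<beta> where \<beta>: "be j = ereal \<beta>"
    using \<open>be j < \<infinity>\<close> \<open>al j < be j\<close> by (cases "be j") auto
  moreover have "al j = ereal (a j)" using alpha_finite[of j] assms by blast
  ultimately have "ereal (a j) < ereal \<beta>" by metis
  then show ?thesis using \<beta> by simp
qed

lemma beta_N1: "j \<in> n1 \<Longrightarrow> be j = \<infinity>"
  by (simp add: N1_def)

lemma alpha_less_iff: "j \<in> n1 \<union> n2 \<Longrightarrow> al j < ereal l \<longleftrightarrow> a j < l"
  using alpha_finite[of j] by (metis less_ereal.simps(1))

lemma less_beta_iff: "j \<in> n2 \<Longrightarrow> ereal l < be j \<longleftrightarrow> l < b j"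
  using beta_finite[of j] by (metis less_ereal.simps(1))

lemma rbar_N1_in_recc:
  assumes "j \<in> n1"
  shows "r j \<in> recc C"
proof (rule unbounded_ray_in_recc[OF open_C convex_C])
  fix M
  show "\<exists>l>M. xb + l *\<^sub>R r j \<in> C"
  proof (rule ccontr)
    assume "\<not> ?thesis"
    then have "be j \<le> ereal M"
      unfolding beta_def by (force intro: Sup_least)
    then show False using beta_N1[OF assms] by simp
  qed
qed

lemma hull_gens_S0: "convex hull gens_S0 \<subseteq> ray_cone B ab (n1 \<union> n2) \<inter> {z. 1 < F z}"
proof (intro hull_minimal subsetI)
  fix z assume "z \<in> gens_S0"
  then obtain j l where j: "j \<in> n1 \<union> n2" "a j < l" and z: "z = l *\<^sub>R r j"
    using alpha_less_iff by blast
  have "0 < a j" using alpha_finite[OF j(1)] by blast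
  then have "1 < (1 / a j) * l" using j(2) by (simp add: field_simps)
  moreover have "j \<notin> B" using j(1) N12_nonbasic by blast
  moreover have "F z = (if j \<in> n1 \<union> n2 then (1 / a j) * l else 0)"
    unfolding z by (rule weighted_coords_rbar[OF \<open>j \<notin> B\<close> N12_nonbasic])
  ultimately have "1 < F z" using j(1) by simp
  moreover have "z \<in> ray_cone B ab (n1 \<union> n2)"
    unfolding z using j \<open>0 < a j\<close> by (intro scaleR_rbar_in_ray_cone N12_nonbasic) auto
  ultimately show "z \<in> ray_cone B ab (n1 \<union> n2) \<inter> {z. 1 < F z}" by blast
qed (intro convex_Int convex_ray_cone convex_weighted_coords_greater)

lemma hull_gens_Sk: "convex hull gens_Sk \<subseteq> ray_cone B ab n2 \<inter> {z. G z < 1}"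
proof (intro hull_minimal subsetI)
  have n2_nonbasic: "n2 \<subseteq> -B" using N12_nonbasic by blast
  fix z assume "z \<in> gens_Sk"
  then obtain j l where j: "j \<in> n2" "0 \<le> l" "l < b j" and z: "z = l *\<^sub>R r j"
    using less_beta_iff by blast
  have "0 < b j" using alpha_finite[of j] beta_finite[OF j(1)] j(1) by auto
  then have "(1 / b j) * l < 1" using j(3) by (simp add: field_simps)
  moreover have "j \<notin> B" using j(1) n2_nonbasic by blast
  moreover have "G z = (if j \<in> n2 then (1 / b j) * l else 0)"
    unfolding z by (rule weighted_coords_rbar[OF \<open>j \<notin> B\<close> n2_nonbasic])
  ultimately have "G z < 1" using j(1) by simp
  moreover have "z \<in> ray_cone B ab n2"
    unfolding z using j n2_nonbasic by (intro scaleR_rbar_in_ray_cone) auto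
  ultimately show "z \<in> ray_cone B ab n2 \<inter> {z. G z < 1}" by blast
qed (intro convex_Int convex_ray_cone convex_weighted_coords_less)

lemma scaled_rbar_in_gens_T:
  assumes j: "j \<in> n1 \<union> n2" and "0 < t" "t < s / a j" and below_beta: "j \<in> n2 \<Longrightarrow> s / b j < t"
  shows "(s / t) *\<^sub>R r j \<in> gens_T"
proof -
  have "0 < a j" using alpha_finite[OF j] by blast
  then have "al j < ereal (s / t)"
    using assms(2,3) alpha_less_iff[OF j] by (simp add: field_simps)
  moreover have "ereal (s / t) < be j"
  proof (cases "j \<in> n2")
    case True
    then have "0 < b j" using \<open>0 < a j\<close> beta_finite[of j] by fastforce
    then have "s / t < b j" using below_beta[OF True] \<open>0 < t\<close> by (simp add: field_simps)
    then show ?thesis using less_beta_iff[OF True] by blast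
  next
    case False
    then show ?thesis using j beta_N1 by simp
  qed
  ultimately show ?thesis using j by blast
qed

lemma G_eq_sum_N12: "G z = (\<Sum>j\<in>n1 \<union> n2. (if j \<in> n2 then 1 / b j else 0) * z$j)"
proof -
  have "(\<Sum>j\<in>n1 \<union> n2. (if j \<in> n2 then 1 / b j else 0) * z$j)
      = (\<Sum>j\<in>n1 \<union> n2. if j \<in> n2 then (1 / b j) * z$j else 0)"
    by (intro sum.cong) simp_all
  also have "\<dots> = (\<Sum>j\<in>(n1 \<union> n2) \<inter> n2. (1 / b j) * z$j)"
    by (rule sum.inter_restrict[symmetric]) simp
  also have "(n1 \<union> n2) \<inter> n2 = n2" by blast
  finally show ?thesis by simp
qed

text \<open>Split the coordinates of \<open>z\<close> as \<open>z\<^sub>j = t\<^sub>j \<cdot> (z\<^sub>j / t\<^sub>j)\<close> with convex weights \<open>t\<close>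
  chosen so that each \<open>z\<^sub>j / t\<^sub>j\<close> lies strictly between \<open>\<alpha>\<^sub>j\<close> and \<open>\<beta>\<^sub>j\<close>.\<close>
lemma levels_in_hull_gens_T:
  assumes z: "z \<in> ray_cone B ab (n1 \<union> n2)" and "1 < F z" "G z < 1"
  shows "z \<in> convex hull gens_T"
proof -
  define J where "J = {j \<in> n1 \<union> n2. 0 < z$j}"
  define cb where "cb j = (if j \<in> n2 then 1 / b j else 0)" for j
  have cb: "0 \<le> cb j \<and> cb j < 1 / a j" if "j \<in> J" for j
    using that alpha_finite[of j] beta_finite[of j] by (auto simp: J_def cb_def field_simps)
  have G_J: "(\<Sum>j\<in>J. cb j * z$j) = G z"
    unfolding G_eq_sum_N12 J_def cb_def
    by (rule ray_cone_weighted_coords_support[OF z N12_nonbasic, symmetric])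
  have F_J: "(\<Sum>j\<in>J. (1 / a j) * z$j) = F z"
    unfolding J_def by (rule ray_cone_weighted_coords_support[OF z N12_nonbasic, symmetric])
  have "\<forall>j\<in>J. cb j * z$j < (1 / a j) * z$j"
  proof
    fix j assume "j \<in> J"
    then have "0 < z$j" by (simp add: J_def)
    with cb[OF \<open>j \<in> J\<close>] show "cb j * z$j < (1 / a j) * z$j"
      by (intro mult_strict_right_mono) auto
  qed
  moreover have "(\<Sum>j\<in>J. cb j * z$j) < 1" "1 < (\<Sum>j\<in>J. (1 / a j) * z$j)"
    using G_J F_J assms(2,3) by linarith+
  ultimately obtain t where t: "\<forall>j\<in>J. cb j * z$j < t j \<and> t j < (1 / a j) * z$j" "sum t J = 1"
    using exists_sum_eq_one_between[where J=J and lo="\<lambda>j. cb j * z$j" and hi="\<lambda>j. (1 / a j) * z$j"]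
    by blast
  have t_pos: "0 < t j" if "j \<in> J" for j
  proof -
    have "0 \<le> cb j * z$j" using cb[OF that] that by (simp add: J_def)
    then show ?thesis using t(1) that by fastforce
  qed
  have "(\<Sum>j\<in>J. t j *\<^sub>R ((z$j / t j) *\<^sub>R r j)) \<in> convex hull gens_T"
  proof (rule convex_sum[OF finite convex_convex_hull t(2)])
    fix j assume "j \<in> J"
    then show "0 \<le> t j" using t_pos by (simp add: less_imp_le)
    show "(z$j / t j) *\<^sub>R r j \<in> convex hull gens_T"
      using t(1) t_pos \<open>j \<in> J\<close>
      by (intro hull_inc scaled_rbar_in_gens_T) (auto simp: J_def cb_def)
  qed
  moreover have "(\<Sum>j\<in>J. t j *\<^sub>R ((z$j / t j) *\<^sub>R r j)) = (\<Sum>j\<in>J. z$j *\<^sub>R r j)"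
    using t_pos by (intro sum.cong) (simp_all add: less_imp_neq[symmetric])
  ultimately show ?thesis
    using ray_cone_eq_sum[OF z N12_nonbasic] unfolding J_def by simp
qed

lemma F_dominates_G: "\<exists>m>1. \<forall>z\<in>ray_cone B ab (n1 \<union> n2). m * G z \<le> F z"
proof -
  define m where "m = Min (insert 2 ((\<lambda>j. b j / a j) ` n2))"
  have a_pos: "0 < a j" and ratio: "1 < b j / a j" if "j \<in> n2" for j
    using that alpha_finite[of j] beta_finite[of j] by auto
  have "1 < m" unfolding m_def using ratio by (subst Min_gr_iff) auto
  moreover have "m * G z \<le> F z" if z: "z \<in> ray_cone B ab (n1 \<union> n2)" for z
  proof -
    have nonneg: "0 \<le> z$j" if "j \<in> n1 \<union> n2" for j
      using z that by (simp add: ray_cone_def coord_nonneg_def)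
    have "m * G z = (\<Sum>j\<in>n2. (m / b j) * z$j)"
      by (simp add: sum_distrib_left)
    also have "\<dots> \<le> (\<Sum>j\<in>n2. (1 / a j) * z$j)"
    proof (rule sum_mono)
      fix j assume j: "j \<in> n2"
      have "m \<le> b j / a j" unfolding m_def using j by (intro Min_le) auto
      moreover have "0 < b j" using a_pos[OF j] ratio[OF j] by (simp add: less_divide_eq)
      ultimately have "m / b j \<le> 1 / a j" using a_pos[OF j] by (simp add: field_simps)
      then show "(m / b j) * z$j \<le> (1 / a j) * z$j"
        using nonneg j by (intro mult_right_mono) auto
    qed
    also have "\<dots> \<le> (\<Sum>j\<in>n1. (1 / a j) * z$j) + (\<Sum>j\<in>n2. (1 / a j) * z$j)"
    proof -
      have "0 \<le> (\<Sum>j\<in>n1. (1 / a j) * z$j)"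
      proof (rule sum_nonneg)
        fix j assume "j \<in> n1"
        then show "0 \<le> (1 / a j) * z$j" using nonneg[of j] alpha_finite[of j] by simp
      qed
      then show ?thesis by linarith
    qed
    also have "\<dots> = F z"
      using N1_N2_disjoint by (simp add: sum.union_disjoint)
    finally show ?thesis .
  qed
  ultimately show ?thesis by blast
qed

lemma TC_subset_S0: "TC C B bb ab \<subseteq> S0 C B bb ab"
proof -
  have "convex hull gens_T \<subseteq> convex hull gens_S0" by (intro hull_mono) blast
  then show ?thesis unfolding TC_def S0_def by blast
qed

text \<open>Generators of \<open>T\<^sup>C\<close> on rays in \<open>N\<^sub>1\<close> are absorbed by \<open>recc C\<close>.\<close>
lemma TC_subset_Sk:
  assumes k: "k \<in> n2"
  shows "TC C B bb ab \<subseteq> Sk C B bb ab k"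
proof -
  let ?K = "\<Union>u\<in>convex hull gens_Sk. \<Union>d\<in>recc C. {u + d}"
  have "0 < b k" using alpha_finite[of k] beta_finite[OF k] k by auto
  then have "0 *\<^sub>R r k \<in> gens_Sk" using k less_beta_iff[OF k, of 0] by blast
  then have zero: "0 \<in> convex hull gens_Sk" by (simp add: hull_inc)
  have "gens_T \<subseteq> ?K"
  proof
    fix z assume "z \<in> gens_T"
    then obtain j l where j: "j \<in> n1 \<union> n2" "a j < l" "ereal l < be j" and z: "z = l *\<^sub>R r j"
      using alpha_less_iff by blast
    have "0 < l" using j(2) alpha_finite[OF j(1)] by linarith
    show "z \<in> ?K"
    proof (cases "j \<in> n2")
      case True
      then have "z \<in> gens_Sk" using j(3) \<open>0 < l\<close> z less_imp_le by blast
      then have "z \<in> convex hull gens_Sk" by (rule hull_inc)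
      then show ?thesis using convex_cone_contains_0[OF convex_cone_recc] by force
    next
      case False
      then have "z \<in> recc C"
        using j(1) z \<open>0 < l\<close> rbar_N1_in_recc by (auto intro: convex_cone_scaleR[OF convex_cone_recc])
      then show ?thesis using zero by force
    qed
  qed
  then have hull_T: "convex hull gens_T \<subseteq> ?K"
    by (intro hull_minimal convex_sums convex_convex_hull convex_recc)
  show ?thesis
  proof
    fix x assume "x \<in> TC C B bb ab"
    then obtain u d where x: "x = xb + u + d" "u \<in> convex hull gens_T" "d \<in> recc C"
      unfolding TC_def by blast
    then obtain u' d' where u: "u = u' + d'" "u' \<in> convex hull gens_Sk" "d' \<in> recc C"
      using hull_T by blast
    have "x = xb + u' + 0 *\<^sub>R r k + (d' + d)" using x u by (simp add: algebra_simps)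
    moreover have "d' + d \<in> recc C" using u x by (intro convex_cone_add[OF convex_cone_recc])
    ultimately show "x \<in> Sk C B bb ab k" unfolding Sk_def using u by blast
  qed
qed

lemma S0_witness:
  assumes "x \<in> S0 C B bb ab"
  obtains u where "u \<in> ray_cone B ab (n1 \<union> n2)" "1 < F u" "x - xb - u \<in> recc C"
proof -
  obtain u d where x: "x = xb + u + d" "u \<in> convex hull gens_S0" "d \<in> recc C"
    using assms unfolding S0_def by blast
  have "u \<in> ray_cone B ab (n1 \<union> n2)" "1 < F u" using x(2) hull_gens_S0 by blast+
  moreover have "x - xb - u \<in> recc C" using x(1,3) by simp
  ultimately show thesis by (rule that)
qed

lemma Sk_witness:
  assumes k: "k \<in> n2" and "x \<in> Sk C B bb ab k"
  shows "\<exists>w. w \<in> ray_space B ab \<inter> coord_nonneg (n2 - {k}) \<inter> coord_zero (-B - n2)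
              \<and> G w < 1 \<and> x - xb - w \<in> recc C"
proof -
  have n2_nonbasic: "n2 \<subseteq> -B" using N12_nonbasic by blast
  obtain u \<mu> d where x: "x = xb + u + \<mu> *\<^sub>R r k + d" "u \<in> convex hull gens_Sk" "\<mu> \<le> 0" "d \<in> recc C"
    using assms(2) unfolding Sk_def by blast
  have u: "u \<in> ray_cone B ab n2" "G u < 1" using x(2) hull_gens_Sk by blast+
  have "k \<notin> B" using k n2_nonbasic by blast
  define w where "w = u + \<mu> *\<^sub>R r k"
  have "w \<in> ray_space B ab"
    unfolding w_def using u(1) rbar_in_ray_space[OF \<open>k \<notin> B\<close>]
    by (intro subspace_add subspace_scale subspace_ray_space) (auto simp: ray_cone_def)
  moreover have "w \<in> coord_nonneg (n2 - {k}) \<inter> coord_zero (-B - n2)"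
  proof -
    have w_eq: "w$j = u$j" if "j \<notin> B" "j \<noteq> k" for j
      using that by (simp add: w_def rbar_component_nonbasic)
    have "0 \<le> w$j" if "j \<in> n2 - {k}" for j
      using that u(1) n2_nonbasic w_eq[of j] by (auto simp: ray_cone_def coord_nonneg_def)
    moreover have "w$j = 0" if "j \<in> -B - n2" for j
      using that u(1) k w_eq[of j] by (auto simp: ray_cone_def coord_zero_def)
    ultimately show ?thesis by (auto simp: coord_nonneg_def coord_zero_def)
  qed
  moreover have "G w < 1"
  proof -
    have "G (\<mu> *\<^sub>R r k) = (if k \<in> n2 then (1 / b k) * \<mu> else 0)"
      by (rule weighted_coords_rbar[OF \<open>k \<notin> B\<close> n2_nonbasic])
    then have "G (\<mu> *\<^sub>R r k) = (1 / b k) * \<mu>" using k by simp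
    moreover have "0 < b k" using alpha_finite[of k] beta_finite[OF k] k by auto
    then have "(1 / b k) * \<mu> \<le> 0" using x(3) by (simp add: divide_nonpos_pos)
    moreover have "G w = G u + G (\<mu> *\<^sub>R r k)"
      unfolding w_def by (rule linear_add[OF linear_weighted_coords])
    ultimately show ?thesis using u(2) by linarith
  qed
  moreover have "x - xb - w = d" using x(1) by (simp add: w_def)
  ultimately show ?thesis using x(4) by blast
qed

text \<open>Minimise \<open>G\<close> over the points of \<open>conv ({u} \<union> w ` N\<^sub>2)\<close> that are nonnegative on \<open>N\<^sub>2\<close>;
  the conditions on \<open>N\<^sub>1\<close>, on the basic coordinates and on \<open>recc C\<close> are inherited from
  \<open>u\<close> and the \<open>w k\<close> by convexity.\<close>
lemma point_below_beta_levels: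
  assumes u: "u \<in> ray_cone B ab (n1 \<union> n2)" "y - u \<in> recc C"
    and w: "\<forall>k\<in>n2. w k \<in> ray_space B ab \<inter> coord_nonneg (n2 - {k}) \<inter> coord_zero (-B - n2)
                   \<and> G (w k) < 1 \<and> y - w k \<in> recc C"
  obtains p where "p \<in> ray_cone B ab (n1 \<union> n2)" "y - p \<in> recc C" "G p < 1"
proof -
  define W where "W = insert u (w ` n2)"
  let ?H = "ray_space B ab \<inter> coord_nonneg n1 \<inter> coord_zero (-B - (n1 \<union> n2)) \<inter> {z. y - z \<in> recc C}"
  have "n1 \<subseteq> -B - n2" using N12_nonbasic N1_N2_disjoint by blast
  then have "coord_zero (-B - n2) \<subseteq> coord_nonneg n1 \<inter> coord_zero (-B - (n1 \<union> n2))"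
    using coord_zero_antimono[of n1 "-B - n2"] coord_zero_antimono[of "-B - (n1 \<union> n2)" "-B - n2"]
      coord_zero_subset_nonneg[of n1] by blast
  then have "W \<subseteq> ?H" using u w unfolding W_def ray_cone_def coord_nonneg_Un by blast
  then have hull_W: "convex hull W \<subseteq> ?H"
    by (intro hull_minimal convex_Int subspace_imp_convex subspace_ray_space convex_coord_nonneg
        convex_coord_zero convex_diff_in_recc)
  have "\<exists>p \<in> convex hull W \<inter> coord_nonneg n2. G p < 1"
  proof (rule convex_hull_point_below_one)
    show "finite W" "u \<in> W" by (simp_all add: W_def)
    show "u \<in> coord_nonneg n2" using u(1) unfolding ray_cone_def coord_nonneg_Un by blast
    show "\<forall>j\<in>n2. 0 < 1 / b j" using alpha_finite beta_finite by fastforce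
    show "\<forall>k\<in>n2. \<exists>w'\<in>W. w' \<in> coord_nonneg (n2 - {k}) \<and> G w' < 1"
      using w unfolding W_def by blast
  qed
  then show thesis
    using that hull_W unfolding ray_cone_def coord_nonneg_Un by blast
qed

lemma S0_Sk_subset_TC:
  assumes S0: "x \<in> S0 C B bb ab" and Sk: "\<forall>k\<in>n2. x \<in> Sk C B bb ab k"
  shows "x \<in> TC C B bb ab"
proof -
  define y where "y = x - xb"
  obtain u where u: "u \<in> ray_cone B ab (n1 \<union> n2)" "1 < F u" "y - u \<in> recc C"
    using S0_witness[OF S0] unfolding y_def by blast
  have "\<forall>k\<in>n2. \<exists>w. w \<in> ray_space B ab \<inter> coord_nonneg (n2 - {k}) \<inter> coord_zero (-B - n2)
                  \<and> G w < 1 \<and> y - w \<in> recc C"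
    using Sk_witness Sk unfolding y_def by blast
  then obtain w where "\<forall>k\<in>n2. w k \<in> ray_space B ab \<inter> coord_nonneg (n2 - {k}) \<inter> coord_zero (-B - n2)
                  \<and> G (w k) < 1 \<and> y - w k \<in> recc C"
    by (rule bchoice[THEN exE])
  then obtain p where p: "p \<in> ray_cone B ab (n1 \<union> n2)" "y - p \<in> recc C" "G p < 1"
    using point_below_beta_levels u(1,3) by blast
  let ?K = "ray_cone B ab (n1 \<union> n2) \<inter> {z. y - z \<in> recc C}"
  obtain m where "1 < m" "\<forall>z\<in>ray_cone B ab (n1 \<union> n2). m * G z \<le> F z"
    using F_dominates_G by blast
  moreover have "convex ?K" by (intro convex_Int convex_ray_cone convex_diff_in_recc)
  ultimately obtain z where z: "z \<in> ?K" "1 < F z" "G z < 1"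
    using linear_levels_crossing[where f="\<lambda>z. F z" and g="\<lambda>z. G z", OF linear_weighted_coords]
      u p by blast
  then have "z \<in> convex hull gens_T" by (intro levels_in_hull_gens_T) auto
  moreover have "x = xb + z + (y - z)" by (simp add: y_def)
  ultimately show ?thesis unfolding TC_def using z(1) by blast
qed

end

text \<open>Only openness and convexity of \<open>C\<close> are needed: for every \<open>x\<close>, not only for \<open>x \<in> P\<^sup>B\<close>,
  membership in \<open>T\<^sup>C\<close> is equivalent to membership in \<open>S\<^sub>0\<^sup>C\<close> and all \<open>S\<^sub>k\<^sup>C\<close>.\<close>
theorem theorem5:
  fixes A :: "real^'n^'m" and b :: "real^'m" and P :: "(real^'n) set"
    and B :: "'n set" and bb :: "'n \<Rightarrow> real" and ab :: "'n \<Rightarrow> 'n \<Rightarrow> real"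
    and C :: "(real^'n) set"
  assumes full_row_rank: "rank A = CARD('m)"
    and P_def: "P = {x. A *v x = b \<and> (\<forall>i. 0 \<le> x$i)}"
    and basis_card: "card B = CARD('m)"
    and basis_indep: "independent ((\<lambda>j. column j A) ` B)"
    and basis_inj: "inj_on (\<lambda>j. column j A) B"
    and tableau: "{x. A *v x = b} = {x. \<forall>i\<in>B. x$i = bb i - (\<Sum>j\<in>-B. ab i j * x$j)}"
    and bb_nonneg: "\<forall>i\<in>B. 0 \<le> bb i"
    and C_open: "open C" and C_convex: "convex C"
    and xbar_notin: "xbar B bb \<notin> closure C"
    and recc_sub: "recc C \<subseteq> recc (PB B bb ab)"
  shows "PB B bb ab - TC C B bb ab =
           (PB B bb ab - S0 C B bb ab) \<union> (\<Union>k\<in>N2 C B bb ab. PB B bb ab - Sk C B bb ab k)"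
proof -
  interpret open_convex_cut C B bb ab
    using C_open C_convex by unfold_locales
  show ?thesis using TC_subset_S0 TC_subset_Sk S0_Sk_subset_TC by blast
qed

end
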